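(* Let $k\ge4$ be even and let $(i,j\mid s,t)\in\mathcal{O}(\mathbb{C},k)$ be normalized, i.e. $0<i<j\le s<t\le k/2$. Then $j-i<t-s$, and consequently $j+s<i+t<k$.
   Context: $\phi=\exp(2\pi\mathrm{i}/k)$, $\mathbf{k}=\{1,\dots,k-1\}$, $\mathbf{k}_0=\{0,\dots,k-1\}$. A quadruple $(i,j\mid s,t)\in\mathbf{k}^4$ with $i\ne s$ is an overlap if $\phi^\omega(\phi^j-1)(\phi^s-1)=(\phi^i-1)(\phi^t-1)$ for some $\omega\in\mathbf{k}_0$; it is trivial if one of $i\equiv\pm j$, $j\equiv\pm t$, $t\equiv\pm s$, $s\equiv\pm i\pmod k$ holds, nontrivial otherwise. $\mathcal{O}(\mathbb{C},k)$ is the set of nontrivial overlaps. *)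

theory Defs
  imports Complex_Main "HOL-Number_Theory.Cong"
begin

definition phi :: "nat \<Rightarrow> complex" where
  "phi k = exp (2 * pi * \<i> / of_nat k)"

definition pm_cong :: "nat \<Rightarrow> nat \<Rightarrow> nat \<Rightarrow> bool" where
  "pm_cong k a b \<longleftrightarrow> [int a = int b] (mod int k) \<or> [int a = - int b] (mod int k)"

definition is_overlap :: "nat \<Rightarrow> nat \<Rightarrow> nat \<Rightarrow> nat \<Rightarrow> nat \<Rightarrow> bool" where
  "is_overlap k i j s t \<longleftrightarrow>
     i \<in> {1..k-1} \<and> j \<in> {1..k-1} \<and> s \<in> {1..k-1} \<and> t \<in> {1..k-1} \<and> i \<noteq> s \<and>
     (\<exists>\<omega>\<in>{0..k-1}. phi k ^ \<omega> * (phi k ^ j - 1) * (phi k ^ s - 1)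
                    = (phi k ^ i - 1) * (phi k ^ t - 1))"

definition trivial_overlap :: "nat \<Rightarrow> nat \<Rightarrow> nat \<Rightarrow> nat \<Rightarrow> nat \<Rightarrow> bool" where
  "trivial_overlap k i j s t \<longleftrightarrow>
     pm_cong k i j \<or> pm_cong k j t \<or> pm_cong k t s \<or> pm_cong k s i"

definition nontrivial_overlaps :: "nat \<Rightarrow> (nat \<times> nat \<times> nat \<times> nat) set" where
  "nontrivial_overlaps k = {(i,j,s,t). is_overlap k i j s t \<and> \<not> trivial_overlap k i j s t}"

end

theory Submission
  imports Defs
begin

text \<open>Since \<open>|\<phi>\<^sup>a - 1| = 2 sin (\<pi> a / k)\<close> for \<open>0 \<le> a \<le> k\<close>, taking absolute values in the
  overlap equation gives \<open>sin(\<pi>j/k) sin(\<pi>s/k) = sin(\<pi>i/k) sin(\<pi>t/k)\<close>. By the product-to-sum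
  formula \<open>2 sin A sin D = cos (D - A) - cos (A + D)\<close>, and because cosine decreases on \<open>[0, \<pi>]\<close>,
  for angles \<open>0 < A < B \<le> C < D \<le> \<pi>/2\<close> with \<open>A + D \<le> B + C\<close> one has
  \<open>sin A sin D < sin B sin C\<close>. Hence \<open>i + t \<le> j + s\<close> is impossible.\<close>

lemma norm_cis_minus_one: "cmod (cis x - 1) = 2 * \<bar>sin (x / 2)\<bar>"
proof -
  have "cos x = 1 - 2 * sin (x / 2) ^ 2" "sin x = 2 * sin (x / 2) * cos (x / 2)"
    using cos_double_sin[of "x / 2"] sin_double[of "x / 2"] by simp_all
  then have "(cos x - 1)\<^sup>2 + (sin x)\<^sup>2 = (2 * sin (x / 2))\<^sup>2"
    using sin_cos_squared_add[of "x / 2"] by algebra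
  moreover have "cmod (cis x - 1) = sqrt ((cos x - 1)\<^sup>2 + (sin x)\<^sup>2)"
    by (simp add: cmod_def)
  ultimately show ?thesis
    by (simp only: real_sqrt_abs abs_mult)
qed

lemma phi_power: "phi k ^ a = cis (2 * pi * real a / real k)"
proof -
  have "phi k = cis (2 * pi / real k)"
    unfolding phi_def cis_conv_exp by (simp add: mult.commute)
  then show ?thesis
    by (simp add: DeMoivre mult_ac)
qed

lemma norm_phi_power_minus_one: "cmod (phi k ^ a - 1) = 2 * \<bar>sin (pi * real a / real k)\<bar>"
  unfolding phi_power norm_cis_minus_one by simp

lemma overlap_abs_sin_product:
  assumes "is_overlap k i j s t"
  shows "\<bar>sin (pi * j / k)\<bar> * \<bar>sin (pi * s / k)\<bar> = \<bar>sin (pi * i / k)\<bar> * \<bar>sin (pi * t / k)\<bar>"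
proof -
  from assms obtain \<omega> where
    "phi k ^ \<omega> * (phi k ^ j - 1) * (phi k ^ s - 1) = (phi k ^ i - 1) * (phi k ^ t - 1)"
    unfolding is_overlap_def by blast
  then have "cmod (phi k ^ \<omega>) * cmod (phi k ^ j - 1) * cmod (phi k ^ s - 1)
      = cmod (phi k ^ i - 1) * cmod (phi k ^ t - 1)"
    by (metis norm_mult)
  moreover have "cmod (phi k ^ \<omega>) = 1"
    unfolding phi_power by simp
  ultimately show ?thesis
    unfolding norm_phi_power_minus_one by simp
qed

lemma sin_mult_sin_less:
  fixes A B C D :: real
  assumes "0 < A" "A < B" "B \<le> C" "C < D" "D \<le> pi / 2" "A + D \<le> B + C"
  shows "sin A * sin D < sin B * sin C"
proof -
  have "cos (D - A) < cos (C - B)"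
    using assms by (intro cos_monotone_0_pi) auto
  moreover have "cos (B + C) \<le> cos (A + D)"
    using assms by (intro cos_monotone_0_pi_le) auto
  moreover have "sin A * sin D = (cos (D - A) - cos (A + D)) / 2"
    using sin_times_sin[of D A] by (simp add: mult.commute add.commute)
  moreover have "sin B * sin C = (cos (C - B) - cos (B + C)) / 2"
    using sin_times_sin[of C B] by (simp add: mult.commute add.commute)
  ultimately show ?thesis
    by simp
qed

lemma sin_product_eq_imp_sum_less:
  fixes k i j s t :: nat
  assumes "0 < i" "i < j" "j \<le> s" "s < t" "2 * t \<le> k"
    and eq: "sin (pi * j / k) * sin (pi * s / k) = sin (pi * i / k) * sin (pi * t / k)"
  shows "j + s < i + t"
proof (rule ccontr)
  assume "\<not> j + s < i + t"
  then have "real i + real t \<le> real j + real s"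
    by linarith
  then have sum_le: "pi * real i + pi * real t \<le> pi * real j + pi * real s"
    by (metis distrib_left mult_left_mono pi_ge_zero)
  have k_pos: "real k > 0"
    using assms by simp
  let ?angle = "\<lambda>a::nat. pi * real a / real k"
  have less: "?angle a < ?angle b" if "a < b" for a b
    using that k_pos by (simp add: divide_strict_right_mono)
  have "pi * (2 * real t) \<le> pi * real k"
    using assms by (intro mult_left_mono) simp_all
  then have "?angle t \<le> pi / 2"
    using k_pos by (simp add: field_simps)
  moreover have "?angle i + ?angle t \<le> ?angle j + ?angle s"
    using sum_le k_pos by (simp add: add_divide_distrib[symmetric] divide_right_mono)
  ultimately have "sin (?angle i) * sin (?angle t) < sin (?angle j) * sin (?angle s)"
    using assms k_pos less by (intro sin_mult_sin_less) (simp_all add: divide_right_mono)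
  with eq show False
    by simp
qed

lemma sin_pi_fraction_nonneg:
  assumes "a \<le> k"
  shows "sin (pi * real a / real k) \<ge> 0"
proof (rule sin_ge_zero)
  show "pi * real a / real k \<le> pi"
    using assms by (cases "k = 0") (simp_all add: field_simps)
qed simp

theorem lemma23:
  fixes k i j s t :: nat
  assumes "k \<ge> 4" and "even k"
    and "(i, j, s, t) \<in> nontrivial_overlaps k"
    and "0 < i" and "i < j" and "j \<le> s" and "s < t" and "2 * t \<le> k"
  shows "j - i < t - s \<and> j + s < i + t \<and> i + t < k"
proof -
  have "is_overlap k i j s t"
    using assms(3) unfolding nontrivial_overlaps_def by simp
  then have "\<bar>sin (pi * j / k)\<bar> * \<bar>sin (pi * s / k)\<bar> = \<bar>sin (pi * i / k)\<bar> * \<bar>sin (pi * t / k)\<bar>"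
    by (rule overlap_abs_sin_product)
  moreover have "a \<le> k" if "a \<le> t" for a
    using that assms(8) by linarith
  ultimately have "sin (pi * j / k) * sin (pi * s / k) = sin (pi * i / k) * sin (pi * t / k)"
    using assms sin_pi_fraction_nonneg by (simp add: abs_of_nonneg)
  then have "j + s < i + t"
    using assms by (intro sin_product_eq_imp_sum_less)
  then show ?thesis
    using assms by auto
qed

end
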